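(* In the setting of the context, for every iteration $n$ (with $R_n\neq0$): (a) $M\subset H_n:=\bigcap_{k=1}^{N_n}H(v_{n,k},\beta_{n,k})$, where $H(v,\beta)=\{x\in X:\langle v,x\rangle=\beta\}$. (b) $J_p(x_n)-J_p(x_0)$ lies in the linear span of the search directions of all previous iterations, $\mathrm{span}\bigcup_{m<n}V_m$, and hence in $\overline{\mathcal{R}(A^* )}$. (c) $x_{n+1}=\Pi^{X}_{H_n}(x_n)$, the Bregman projection of $x_n$ onto $H_n$ in $X$, and $J_p(x_{n+1})=\Pi^{X^*}_{J_p(x_n)+V_n}(J_p(z))$ for every $z\in M$, where $\Pi^{X^*}$ is the Bregman projection in $X^*$. (d) $J_{p^*}(v_{n,N_n})=\Pi^{X}_{V_{n-1}^{\perp}}(J_{p^*}(u_n))$, where $V_{n-1}^\perp=\{x\in X:\langle v,x\rangle=0\ \forall v\in V_{n-1}\}$.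
   Context: $X$ is a real smooth, uniformly convex Banach space, $Y$ a real Banach space, $A:X\to Y$ bounded linear with adjoint $A^*$, $y\in\mathcal{R}(A)$, $M=\{x:Ax=y\}$. Fix $p,r\in(1,\infty)$, $p^*=p/(p-1)$. $J_p:X\to X^*$ is the duality mapping with gauge $t^{p-1}$, $J_{p^*}:X^*\to X$ that of $X^*$ with gauge $t^{p^*-1}$ (inverse of $J_p$), $J_r^Y$ a single-valued selection of the duality mapping of $Y$ with gauge $t^{r-1}$. Bregman distance in $X$: $D_p(x,z)=\tfrac1{p^*}\|x\|^p-\langle J_p(x),z\rangle+\tfrac1p\|z\|^p$; $\Pi^X_C(x)$ is the minimizer of $D_p(x,\cdot)$ over a closed convex nonempty $C\subset X$. In $X^*$ the Bregman distance is $D_{p^*}(x^*,z^* )=\tfrac1p\|x^*\|^{p^*}-\langle z^*,J_{p^*}(x^* )\rangle+\tfrac1{p^*}\|z^*\|^{p^*}$, and $\Pi^{X^*}_C(x^* )$ minimizes $D_{p^*}(x^*,\cdot)$ over closed convex $C\subset X^*$. Method: choose $x_0$ with $J_p(x_0)\in\overline{\mathcal{R}(A^* )}$, fix $N\in\mathbb{N}$, $N_n=\min(N,n+1)$, $V_{-1}=\{0\}$. For $n=0,1,\dots$: $w_n=Ax_n-y$, $R_n=\|w_n\|$; stop if $R_n=0$. Else $u_n^*=J_r^Y(w_n)$, $u_n=A^*u_n^*$. Let $s_n$ minimize $s\mapsto\|u_n-\sum_{i=1}^{N_{n-1}}s_iv_{n-1,i}\|^{p^*}$ (empty sum for $n=0$),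 set $v_{n,N_n}=u_n-\sum_k s_{n,k}v_{n-1,k}$ with precursor $w^*_{n,N_n}=u_n^*-\sum_k s_{n,k}w^*_{n-1,k}$; $v_{n,1},\dots,v_{n,N_n-1}$ with precursors are the last $N_n-1$ entries of the previous lists, in order ($v_{n,k}=A^*w^*_{n,k}$). $V_n=\mathrm{span}\{v_{n,1},\dots,v_{n,N_n}\}$, offsets $\beta_{n,k}=\langle w^*_{n,k},y\rangle$; $t_n$ minimizes $h_n(t)=\tfrac1{p^*}\|J_p(x_n)-\sum_k t_kv_{n,k}\|^{p^*}+\sum_k t_k\beta_{n,k}$; $x_{n+1}=J_{p^*}(J_p(x_n)-\sum_k t_{n,k}v_{n,k})$. *)

theory Defs
  imports "HOL-Analysis.Analysis"
begin

text \<open>The real Banach space X is a type of class banach; its dual X* is the type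
  of bounded linear functionals (a \<Rightarrow>L real) with the operator norm.\<close>

definition uniformly_convex :: "'a::real_normed_vector itself \<Rightarrow> bool" where
  "uniformly_convex _ \<longleftrightarrow>
     (\<forall>\<epsilon>>0. \<epsilon> \<le> 2 \<longrightarrow> (\<exists>\<delta>>0. \<forall>x y::'a. norm x \<le> 1 \<longrightarrow> norm y \<le> 1 \<longrightarrow>
        norm (x - y) \<ge> \<epsilon> \<longrightarrow> norm ((1/2) *\<^sub>R (x + y)) \<le> 1 - \<delta>))"

definition smooth_space :: "'a::real_normed_vector itself \<Rightarrow> bool" where
  "smooth_space _ \<longleftrightarrow>
     (\<forall>x::'a. x \<noteq> 0 \<longrightarrow> (\<exists>!f::'a \<Rightarrow>\<^sub>L real. norm f = 1 \<and> blinfun_apply f x = norm x))"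

definition conj_exp :: "real \<Rightarrow> real" where
  "conj_exp p = p / (p - 1)"

text \<open>Duality mapping J_p : X \<rightarrow> X* with gauge t^(p-1) (single valued since X is smooth).\<close>
definition Jp :: "real \<Rightarrow> 'a::real_normed_vector \<Rightarrow> ('a \<Rightarrow>\<^sub>L real)" where
  "Jp p x = (THE f. blinfun_apply f x = norm x powr p \<and> norm f = norm x powr (p - 1))"

text \<open>Duality mapping J_{p*} : X* \<rightarrow> X** = X (X reflexive) with gauge t^(p*-1).\<close>
definition Jpstar :: "real \<Rightarrow> ('a::real_normed_vector \<Rightarrow>\<^sub>L real) \<Rightarrow> 'a" where
  "Jpstar p xs = (THE x. blinfun_apply xs x = norm xs powr (conj_exp p)
                        \<and> norm x = norm xs powr (conj_exp p - 1))"

definition adj :: "('a::real_normed_vector \<Rightarrow>\<^sub>L 'b::real_normed_vector)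
                    \<Rightarrow> ('b \<Rightarrow>\<^sub>L real) \<Rightarrow> ('a \<Rightarrow>\<^sub>L real)" where
  "adj A u = u o\<^sub>L A"

definition Dp :: "real \<Rightarrow> 'a::real_normed_vector \<Rightarrow> 'a \<Rightarrow> real" where
  "Dp p x z = (1 / conj_exp p) * norm x powr p - blinfun_apply (Jp p x) z + (1 / p) * norm z powr p"

definition Dpstar :: "real \<Rightarrow> ('a::real_normed_vector \<Rightarrow>\<^sub>L real) \<Rightarrow> ('a \<Rightarrow>\<^sub>L real) \<Rightarrow> real" where
  "Dpstar p xs zs = (1 / p) * norm xs powr (conj_exp p) - blinfun_apply zs (Jpstar p xs)
                     + (1 / conj_exp p) * norm zs powr (conj_exp p)"

definition bproj :: "real \<Rightarrow> 'a::real_normed_vector set \<Rightarrow> 'a \<Rightarrow> 'a" where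
  "bproj p C x = (THE z. z \<in> C \<and> (\<forall>z'\<in>C. Dp p x z \<le> Dp p x z'))"

definition bprojstar :: "real \<Rightarrow> ('a::real_normed_vector \<Rightarrow>\<^sub>L real) set
                         \<Rightarrow> ('a \<Rightarrow>\<^sub>L real) \<Rightarrow> ('a \<Rightarrow>\<^sub>L real)" where
  "bprojstar p C xs = (THE z. z \<in> C \<and> (\<forall>z'\<in>C. Dpstar p xs z \<le> Dpstar p xs z'))"

definition hyperplane :: "('a::real_normed_vector \<Rightarrow>\<^sub>L real) \<Rightarrow> real \<Rightarrow> 'a set" where
  "hyperplane v \<beta> = {x. blinfun_apply v x = \<beta>}"

definition perp :: "('a::real_normed_vector \<Rightarrow>\<^sub>L real) set \<Rightarrow> 'a set" where
  "perp V = {x. \<forall>v\<in>V. blinfun_apply v x = 0}"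

definition Nn :: "nat \<Rightarrow> nat \<Rightarrow> nat" where
  "Nn N n = min N (Suc n)"

text \<open>Length of the previous list, N_{n-1}, with N_{-1} = 0 (V_{-1} = {0}).\<close>
definition Nprev :: "nat \<Rightarrow> nat \<Rightarrow> nat" where
  "Nprev N n = (if n = 0 then 0 else Nn N (n - 1))"

end

theory Submission
  imports Defs
begin

text \<open>A point \<open>z0\<close> of a convex set \<open>C\<close> is the Bregman projection of \<open>x\<close> as soon as it satisfies
  the variational inequality \<open>\<langle>J_p x - J_p z0, z - z0\<rangle> \<le> 0\<close> for all \<open>z \<in> C\<close>: the inequality
  says that \<open>z0\<close> minimises \<open>D_p(x,\<cdot>)\<close> on \<open>C\<close> (by the subgradient inequality of \<open>\<parallel>\<cdot>\<parallel>^p/p\<close>, a form of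
  Young's inequality), and the minimiser is unique because uniform convexity makes \<open>\<parallel>\<cdot>\<parallel>^p\<close> strictly
  convex; the same holds in \<open>X*\<close>, whose norm is strictly convex because \<open>X\<close> is smooth.
  Differentiating the minimality of \<open>t_n\<close> and \<open>s_n\<close> in each coordinate, using that \<open>J_{p*}\<close> is the
  derivative of \<open>\<parallel>\<cdot>\<parallel>^{p*}/p*\<close> on \<open>X*\<close> (it is norm-continuous since \<open>X\<close> is uniformly convex), gives
  \<open>\<langle>v_{n,k}, x_{n+1}\<rangle> = \<beta>_{n,k}\<close> and \<open>\<langle>v_{n-1,k}, J_{p*}(v_{n,N_n})\<rangle> = 0\<close>. With these orthogonality
  relations each of the three projection identities is the variational inequality, holding with
  equality; (a) holds since \<open>Az = y\<close> puts \<open>z\<close> on every hyperplane, and (b) since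
  \<open>J_p(x_{m+1}) - J_p(x_m) \<in> V_m\<close>.\<close>

lemma conj_exp_facts:
  assumes "1 < p"
  shows "1 < conj_exp p" "1/p + 1/conj_exp p = 1" "(conj_exp p - 1) * p = conj_exp p"
    "(p - 1) * conj_exp p = p" "(conj_exp p - 1) * (p - 1) = 1"
  using assms by (auto simp: conj_exp_def field_simps)

lemma powr_midpoint_strict:
  fixes a b r :: real
  assumes "0 \<le> a" "a < b" "1 < r"
  shows "((a + b)/2) powr r < (a powr r + b powr r)/2"
proof -
  define m where "m = (a + b)/2"
  have m: "a < m" "m < b" "0 < m" "b - m = m - a" using assms by (auto simp: m_def field_simps)
  have deriv: "\<And>x. 0 < x \<Longrightarrow> ((\<lambda>x. x powr r) has_real_derivative r * x powr (r - 1)) (at x)"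
    by (rule has_real_derivative_powr)
  obtain \<xi> where \<xi>: "m < \<xi>" "b powr r - m powr r = (b - m) * (r * \<xi> powr (r - 1))"
    using MVT2[of m b "\<lambda>x. x powr r" "\<lambda>x. r * x powr (r - 1)"] m deriv by force
  show ?thesis
  proof (cases "a = 0")
    case True
    have "(2::real) powr 1 < 2 powr r" using assms by (intro powr_less_mono) auto
    hence "b powr r / 2 powr r < b powr r / 2" using assms True
      by (intro divide_strict_left_mono) auto
    thus ?thesis using True assms by (simp add: powr_divide)
  next
    case False
    obtain \<eta> where \<eta>: "a < \<eta>" "\<eta> < m" "m powr r - a powr r = (m - a) * (r * \<eta> powr (r - 1))"
      using MVT2[of a m "\<lambda>x. x powr r" "\<lambda>x. r * x powr (r - 1)"] m deriv False assms(1) by force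
    have "\<eta> powr (r - 1) < \<xi> powr (r - 1)" using \<eta> \<xi> False assms by (intro powr_less_mono2) auto
    hence "(m - a) * (r * \<eta> powr (r - 1)) < (m - a) * (r * \<xi> powr (r - 1))"
      using m assms by (intro mult_strict_left_mono) auto
    hence "m powr r - a powr r < b powr r - m powr r" using \<eta>(3) \<xi>(2) m(4) by simp
    thus ?thesis unfolding m_def[symmetric] by (simp add: field_simps)
  qed
qed

definition strictly_convex_space :: "'a::real_normed_vector itself \<Rightarrow> bool" where
  "strictly_convex_space _ \<longleftrightarrow>
     (\<forall>a b::'a. norm a \<le> 1 \<longrightarrow> norm b \<le> 1 \<longrightarrow> 1 \<le> norm ((1/2) *\<^sub>R (a + b)) \<longrightarrow> a = b)"

lemma uniformly_convex_imp_strictly_convex: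
  assumes "uniformly_convex TYPE('a::real_normed_vector)"
  shows "strictly_convex_space TYPE('a)"
  unfolding strictly_convex_space_def
proof (intro allI impI)
  fix a b :: 'a
  assume ab: "norm a \<le> 1" "norm b \<le> 1" "1 \<le> norm ((1/2) *\<^sub>R (a + b))"
  show "a = b"
  proof (rule ccontr)
    assume "a \<noteq> b"
    hence "0 < norm (a - b)" "norm (a - b) \<le> 2"
      using ab norm_triangle_ineq4[of a b] by auto
    then obtain \<delta> where "\<delta> > 0" "norm ((1/2) *\<^sub>R (a + b)) \<le> 1 - \<delta>"
      using assms ab unfolding uniformly_convex_def by (meson order_refl)
    thus False using ab by simp
  qed
qed

lemma norm_powr_midpoint_strict:
  fixes a b :: "'a::real_normed_vector"
  assumes "strictly_convex_space TYPE('a)" "a \<noteq> b" "1 < r"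
  shows "norm ((1/2) *\<^sub>R (a + b)) powr r < (norm a powr r + norm b powr r)/2"
proof (cases "norm a = norm b")
  case True
  define R where "R = norm a"
  have R: "R > 0" using True assms(2) by (auto simp: R_def)
  have "norm ((1/2) *\<^sub>R (a + b)) < R"
  proof (rule ccontr)
    assume "\<not> ?thesis"
    hence "1 \<le> norm ((1/2) *\<^sub>R (a /\<^sub>R R + b /\<^sub>R R))" using R
      by (simp add: scaleR_add_right[symmetric] del: scaleR_add_right) (simp add: field_simps)
    moreover have "norm (a /\<^sub>R R) \<le> 1" "norm (b /\<^sub>R R) \<le> 1" using R True by (auto simp: R_def)
    ultimately have "a /\<^sub>R R = b /\<^sub>R R" using assms(1) unfolding strictly_convex_space_def by blast
    thus False using R assms(2) by simp
  qed
  hence "norm ((1/2) *\<^sub>R (a + b)) powr r < R powr r" using assms(3)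
    by (intro powr_less_mono2) auto
  thus ?thesis using True by (simp add: R_def)
next
  case False
  have "norm ((1/2) *\<^sub>R (a + b)) powr r \<le> ((norm a + norm b)/2) powr r"
    using norm_triangle_ineq[of a b] assms(3) by (intro powr_mono2) auto
  also have "\<dots> < (norm a powr r + norm b powr r)/2"
    using False powr_midpoint_strict[of "norm a" "norm b" r] powr_midpoint_strict[of "norm b" "norm a" r] assms(3)
    by (cases "norm a < norm b") (auto simp: add.commute)
  finally show ?thesis .
qed

lemma minimizer_unique_if_midpoint_strict:
  fixes f :: "'a::real_vector \<Rightarrow> real"
  assumes "convex C" "z1 \<in> C" "z2 \<in> C"
    and "\<forall>z\<in>C. f z1 \<le> f z" "\<forall>z\<in>C. f z2 \<le> f z"
    and strict: "z1 \<noteq> z2 \<Longrightarrow> f ((1/2) *\<^sub>R (z1 + z2)) < (f z1 + f z2)/2"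
  shows "z1 = z2"
proof (rule ccontr)
  assume "z1 \<noteq> z2"
  have "(1/2) *\<^sub>R (z1 + z2) \<in> C"
    using convexD[OF assms(1-3), of "1/2" "1/2"] by (simp add: scaleR_add_right)
  thus False using assms(4,5) strict[OF \<open>z1 \<noteq> z2\<close>] by fastforce
qed

lemma uniformly_convex_norming_close:
  fixes f :: "'a::real_normed_vector \<Rightarrow>\<^sub>L real"
  assumes "uniformly_convex TYPE('a)" "0 < \<epsilon>"
  obtains \<delta> where "\<delta> > 0"
    "\<And>a b. norm a \<le> 1 \<Longrightarrow> norm b \<le> 1 \<Longrightarrow> f a > norm f * (1 - \<delta>) \<Longrightarrow> f b > norm f * (1 - \<delta>)
       \<Longrightarrow> norm (a - b) < \<epsilon>"
proof -
  have "0 < min \<epsilon> 2" "min \<epsilon> 2 \<le> 2" using assms(2) by auto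
  then obtain \<delta> where \<delta>: "\<delta> > 0" "\<And>a b::'a. norm a \<le> 1 \<Longrightarrow> norm b \<le> 1 \<Longrightarrow>
      norm (a - b) \<ge> min \<epsilon> 2 \<Longrightarrow> norm ((1/2) *\<^sub>R (a + b)) \<le> 1 - \<delta>"
    using assms(1) unfolding uniformly_convex_def by meson
  have "norm (a - b) < \<epsilon>"
    if ab: "norm a \<le> 1" "norm b \<le> 1" "f a > norm f * (1 - \<delta>)" "f b > norm f * (1 - \<delta>)" for a b
  proof (rule ccontr)
    assume "\<not> norm (a - b) < \<epsilon>"
    hence "norm ((1/2) *\<^sub>R (a + b)) \<le> 1 - \<delta>" using \<delta>(2) ab(1,2) by simp
    hence "f ((1/2) *\<^sub>R (a + b)) \<le> norm f * (1 - \<delta>)"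
      using norm_blinfun[of f "(1/2) *\<^sub>R (a + b)"] mult_left_mono[of _ "1 - \<delta>" "norm f"]
      by (smt (verit) norm_ge_zero real_norm_def)
    moreover have "f ((1/2) *\<^sub>R (a + b)) = (f a + f b)/2"
      by (simp add: blinfun.scaleR_right blinfun.add_right)
    ultimately show False using ab(3,4) by simp
  qed
  thus thesis using that \<delta>(1) by blast
qed

lemma exists_almost_norming:
  fixes f :: "'a::real_normed_vector \<Rightarrow>\<^sub>L real"
  assumes "0 < \<epsilon>"
  obtains a where "norm a \<le> 1" "f a > norm f - \<epsilon>"
proof -
  have "\<exists>a. norm a \<le> 1 \<and> f a > norm f - \<epsilon>"
  proof (rule ccontr)
    assume "\<not> ?thesis"
    hence le: "\<And>a. norm a \<le> 1 \<Longrightarrow> f a \<le> norm f - \<epsilon>" by (auto simp: not_less)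
    have "norm f \<le> norm f - \<epsilon>"
    proof (rule norm_blinfun_bound)
      show "0 \<le> norm f - \<epsilon>" using le[of 0] by simp
      fix a :: 'a
      show "norm (f a) \<le> (norm f - \<epsilon>) * norm a"
      proof (cases "a = 0")
        case False
        have "f (sgn a) \<le> norm f - \<epsilon>" "f (- sgn a) \<le> norm f - \<epsilon>"
          using le by (auto simp: norm_sgn)
        moreover have "f (sgn a) = f a / norm a" "f (- sgn a) = - f a / norm a"
          by (auto simp: sgn_div_norm blinfun.scaleR_right blinfun.minus_right divide_inverse mult.commute)
        ultimately have "\<bar>f a\<bar> / norm a \<le> norm f - \<epsilon>" by (simp add: abs_if)
        thus ?thesis using False by (simp add: pos_divide_le_eq)
      qed simp
    qed
    thus False using assms by simp
  qed
  thus thesis using that by blast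
qed

lemma uniformly_convex_tendsto_norming:
  fixes f :: "'a::real_normed_vector \<Rightarrow>\<^sub>L real"
  assumes uc: "uniformly_convex TYPE('a)" and "f \<noteq> 0"
    and "\<And>i. norm (a i) \<le> 1" "((\<lambda>i. f (a i)) \<longlongrightarrow> norm f) F"
    and "norm a0 \<le> 1" "f a0 = norm f"
  shows "(a \<longlongrightarrow> a0) F"
proof (rule tendstoI)
  fix \<epsilon> :: real assume "0 < \<epsilon>"
  then obtain \<delta> where \<delta>: "\<delta> > 0" "\<And>a b. norm a \<le> 1 \<Longrightarrow> norm b \<le> 1
      \<Longrightarrow> f a > norm f * (1 - \<delta>) \<Longrightarrow> f b > norm f * (1 - \<delta>) \<Longrightarrow> norm (a - b) < \<epsilon>"
    using uniformly_convex_norming_close[OF uc] by blast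
  have below: "norm f * (1 - \<delta>) < norm f" using assms(2) \<delta>(1) by simp
  have "\<forall>\<^sub>F i in F. f (a i) > norm f * (1 - \<delta>)" using assms(4) below by (rule order_tendstoD)
  thus "\<forall>\<^sub>F i in F. dist (a i) a0 < \<epsilon>"
    by eventually_elim (use \<delta>(2) assms(3,5,6) below in \<open>auto simp: dist_norm\<close>)
qed

lemma uniformly_convex_Cauchy_norming:
  fixes f :: "'a::real_normed_vector \<Rightarrow>\<^sub>L real"
  assumes uc: "uniformly_convex TYPE('a)" and "f \<noteq> 0"
    and "\<And>k. norm (X k) \<le> 1" "(\<lambda>k. f (X k)) \<longlonglongrightarrow> norm f"
  shows "Cauchy X"
proof (rule metric_CauchyI)
  fix \<epsilon> :: real assume "0 < \<epsilon>"
  then obtain \<delta> where \<delta>: "\<delta> > 0" "\<And>a b. norm a \<le> 1 \<Longrightarrow> norm b \<le> 1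
      \<Longrightarrow> f a > norm f * (1 - \<delta>) \<Longrightarrow> f b > norm f * (1 - \<delta>) \<Longrightarrow> norm (a - b) < \<epsilon>"
    using uniformly_convex_norming_close[OF uc] by blast
  have "norm f * (1 - \<delta>) < norm f" using assms(2) \<delta>(1) by simp
  then obtain M where "\<And>m. M \<le> m \<Longrightarrow> f (X m) > norm f * (1 - \<delta>)"
    using order_tendstoD(1)[OF assms(4)] unfolding eventually_sequentially by blast
  thus "\<exists>M. \<forall>m\<ge>M. \<forall>n\<ge>M. dist (X m) (X n) < \<epsilon>"
    using \<delta>(2) assms(3) unfolding dist_norm by blast
qed

lemma uniformly_convex_norm_attained:
  fixes f :: "'a::banach \<Rightarrow>\<^sub>L real"
  assumes uc: "uniformly_convex TYPE('a)" and "f \<noteq> 0"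
  obtains e where "norm e = 1" "f e = norm f"
proof -
  have "\<exists>a. norm a \<le> 1 \<and> f a > norm f - inverse (real (Suc k))" for k
    by (rule exists_almost_norming[of "inverse (real (Suc k))" f]) auto
  then have "\<exists>X. \<forall>k. norm (X k) \<le> 1 \<and> f (X k) > norm f - inverse (real (Suc k))"
    by (intro choice allI)
  then obtain X where X: "\<And>k. norm (X k) \<le> 1" "\<And>k. f (X k) > norm f - inverse (real (Suc k))"
    by auto
  have "(\<lambda>k. f (X k)) \<longlonglongrightarrow> norm f"
  proof (rule tendsto_sandwich)
    show "\<forall>\<^sub>F k in sequentially. norm f - inverse (real (Suc k)) \<le> f (X k)"
      using X(2) by (simp add: less_imp_le)
    show "\<forall>\<^sub>F k in sequentially. f (X k) \<le> norm f"
    proof (intro always_eventually allI)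
      fix k
      show "f (X k) \<le> norm f"
        using norm_blinfun[of f "X k"] X(1)[of k] mult_left_le[of "norm (X k)" "norm f"] by simp
    qed
    show "(\<lambda>k. norm f - inverse (real (Suc k))) \<longlonglongrightarrow> norm f"
      using tendsto_diff[OF tendsto_const LIMSEQ_inverse_real_of_nat] by simp
  qed simp
  moreover obtain l where l: "X \<longlonglongrightarrow> l"
    using uniformly_convex_Cauchy_norming[OF uc assms(2) X(1) calculation] Cauchy_convergent_iff convergent_def
    by blast
  moreover have "(\<lambda>k. f (X k)) \<longlonglongrightarrow> f l" using l by (intro tendsto_intros)
  ultimately have "f l = norm f" using LIMSEQ_unique by blast
  moreover have "norm l \<le> 1" using tendsto_norm[OF l] X(1) by (intro LIMSEQ_le_const2) auto
  moreover have "f l \<le> norm f * norm l" using norm_blinfun[of f l] by simp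
  ultimately have "norm l = 1" using assms(2) by (auto simp: mult_le_cancel_left1)
  thus thesis using that \<open>f l = norm f\<close> by blast
qed

lemma Jp_ex1:
  fixes x :: "'a::real_normed_vector"
  assumes sm: "smooth_space TYPE('a)" and p: "1 < p"
  shows "\<exists>!f. blinfun_apply f x = norm x powr p \<and> norm f = norm x powr (p - 1)"
proof (cases "x = 0")
  case True thus ?thesis using p by (auto intro!: exI[of _ 0])
next
  case False
  define c where "c = norm x powr (p - 1)"
  have c: "c > 0" "c * norm x = norm x powr p"
    using False by (auto simp: c_def powr_diff)
  obtain g :: "'a \<Rightarrow>\<^sub>L real" where g: "norm g = 1" "g x = norm x"
    and g_unique: "\<And>h. norm h = 1 \<Longrightarrow> blinfun_apply h x = norm x \<Longrightarrow> h = g"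
    using sm False unfolding smooth_space_def by metis
  show ?thesis
  proof (rule ex1I[of _ "c *\<^sub>R g"])
    show "(c *\<^sub>R g) x = norm x powr p \<and> norm (c *\<^sub>R g) = norm x powr (p - 1)"
      using g c by (simp add: c_def blinfun.scaleR_left)
  next
    fix f :: "'a \<Rightarrow>\<^sub>L real" assume f: "f x = norm x powr p \<and> norm f = norm x powr (p - 1)"
    have "f /\<^sub>R c = g"
      by (rule g_unique) (use f c in \<open>auto simp: c_def field_simps blinfun.scaleR_left\<close>)
    thus "f = c *\<^sub>R g" using c by auto
  qed
qed

lemma
  fixes x :: "'a::real_normed_vector"
  assumes "smooth_space TYPE('a)" "1 < p"
  shows Jp_apply_self: "Jp p x x = norm x powr p"
    and norm_Jp: "norm (Jp p x) = norm x powr (p - 1)"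
  using theI'[OF Jp_ex1[OF assms, of x]] unfolding Jp_def by auto

lemma Jp_eqI:
  fixes x :: "'a::real_normed_vector" and f :: "'a \<Rightarrow>\<^sub>L real"
  assumes "smooth_space TYPE('a)" "1 < p" "f x = norm x powr p" "norm f = norm x powr (p - 1)"
  shows "Jp p x = f"
  unfolding Jp_def using Jp_ex1[OF assms(1,2), of x] assms(3,4) by (intro the1_equality) auto

lemma Jpstar_ex1:
  fixes \<phi> :: "'a::banach \<Rightarrow>\<^sub>L real"
  assumes uc: "uniformly_convex TYPE('a)" and p: "1 < p"
  shows "\<exists>!x. blinfun_apply \<phi> x = norm \<phi> powr (conj_exp p) \<and> norm x = norm \<phi> powr (conj_exp p - 1)"
proof (cases "\<phi> = 0")
  case True thus ?thesis using conj_exp_facts[OF p] by (auto intro!: exI[of _ 0])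
next
  case False
  define q where "q = conj_exp p"
  define R where "R = norm \<phi> powr (q - 1)"
  have R: "R > 0" "R * norm \<phi> = norm \<phi> powr q"
    using False by (auto simp: R_def powr_diff)
  obtain e where e: "norm e = 1" "\<phi> e = norm \<phi>"
    using uniformly_convex_norm_attained[OF uc False] by blast
  show ?thesis unfolding q_def[symmetric]
  proof (rule ex1I[of _ "R *\<^sub>R e"])
    show "\<phi> (R *\<^sub>R e) = norm \<phi> powr q \<and> norm (R *\<^sub>R e) = norm \<phi> powr (q - 1)"
      using e R by (simp add: R_def blinfun.scaleR_right)
  next
    fix x :: 'a assume x: "\<phi> x = norm \<phi> powr q \<and> norm x = norm \<phi> powr (q - 1)"
    have "norm \<phi> = \<phi> ((1/2) *\<^sub>R (x /\<^sub>R R + e))"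
      using x e R by (simp add: blinfun.scaleR_right blinfun.add_right field_simps)
    also have "\<dots> \<le> norm \<phi> * norm ((1/2) *\<^sub>R (x /\<^sub>R R + e))"
      using norm_blinfun[of \<phi>] by (metis abs_le_D1 real_norm_def)
    finally have "1 \<le> norm ((1/2) *\<^sub>R (x /\<^sub>R R + e))" using False by simp
    moreover have "norm (x /\<^sub>R R) \<le> 1" "norm e \<le> 1" using x R e by (simp_all add: R_def)
    ultimately have "x /\<^sub>R R = e"
      using uniformly_convex_imp_strictly_convex[OF uc] unfolding strictly_convex_space_def by blast
    thus "x = R *\<^sub>R e" using R by auto
  qed
qed

lemma
  fixes \<phi> :: "'a::banach \<Rightarrow>\<^sub>L real"
  assumes "uniformly_convex TYPE('a)" "1 < p"
  shows apply_Jpstar_self: "\<phi> (Jpstar p \<phi>) = norm \<phi> powr (conj_exp p)"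
    and norm_Jpstar: "norm (Jpstar p \<phi>) = norm \<phi> powr (conj_exp p - 1)"
  using theI'[OF Jpstar_ex1[OF assms, of \<phi>]] unfolding Jpstar_def by auto

lemma Jpstar_eqI:
  fixes \<phi> :: "'a::banach \<Rightarrow>\<^sub>L real"
  assumes "uniformly_convex TYPE('a)" "1 < p"
    and "\<phi> x = norm \<phi> powr (conj_exp p)" "norm x = norm \<phi> powr (conj_exp p - 1)"
  shows "Jpstar p \<phi> = x"
  unfolding Jpstar_def using Jpstar_ex1[OF assms(1,2), of \<phi>] assms(3,4) by (intro the1_equality) auto

lemma Jp_Jpstar:
  fixes \<phi> :: "'a::banach \<Rightarrow>\<^sub>L real"
  assumes "uniformly_convex TYPE('a)" "smooth_space TYPE('a)" "1 < p"
  shows "Jp p (Jpstar p \<phi>) = \<phi>"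
  using apply_Jpstar_self[OF assms(1,3), of \<phi>] norm_Jpstar[OF assms(1,3), of \<phi>] conj_exp_facts[OF assms(3)]
  by (intro Jp_eqI[OF assms(2,3)]) (simp_all add: powr_powr)

lemma Jpstar_Jp:
  fixes x :: "'a::banach"
  assumes "uniformly_convex TYPE('a)" "smooth_space TYPE('a)" "1 < p"
  shows "Jpstar p (Jp p x) = x"
  using Jp_apply_self[OF assms(2,3), of x] norm_Jp[OF assms(2,3), of x] conj_exp_facts[OF assms(3)]
  by (intro Jpstar_eqI[OF assms(1,3)]) (simp_all add: powr_powr mult.commute)

lemma strictly_convex_dual:
  assumes uc: "uniformly_convex TYPE('a::banach)" and sm: "smooth_space TYPE('a)"
  shows "strictly_convex_space TYPE('a \<Rightarrow>\<^sub>L real)"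
  unfolding strictly_convex_space_def
proof (intro allI impI)
  fix f g :: "'a \<Rightarrow>\<^sub>L real"
  assume fg: "norm f \<le> 1" "norm g \<le> 1" "1 \<le> norm ((1/2) *\<^sub>R (f + g))"
  have "(1/2) *\<^sub>R (f + g) \<noteq> 0" using fg by auto
  then obtain e where e: "norm e = 1" "((1/2) *\<^sub>R (f + g)) e = norm ((1/2) *\<^sub>R (f + g))"
    using uniformly_convex_norm_attained[OF uc] by blast
  have le_norm: "h e \<le> norm h" for h :: "'a \<Rightarrow>\<^sub>L real"
    using norm_blinfun[of h e] e(1) by simp
  have "((1/2) *\<^sub>R (f + g)) e = (f e + g e)/2" by (simp add: blinfun.add_left blinfun.scaleR_left)
  hence "f e = 1" "g e = 1" "norm f = 1" "norm g = 1"
    using le_norm[of f] le_norm[of g] fg e(2) by auto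
  \<comment> \<open>both f and g are norming functionals of e, which smoothness makes unique\<close>
  thus "f = g" using sm e(1) unfolding smooth_space_def by (metis norm_zero zero_neq_one)
qed

lemma Jp_subgradient:
  fixes z w :: "'a::real_normed_vector"
  assumes sm: "smooth_space TYPE('a)" and p: "1 < p"
  shows "(1/p) * norm z powr p + Jp p z (w - z) \<le> (1/p) * norm w powr p"
proof -
  note cf = conj_exp_facts[OF p]
  define q where "q = conj_exp p"
  have "Jp p z w \<le> norm (Jp p z) * norm w"
    using norm_blinfun[of "Jp p z" w] by simp
  also have "\<dots> = norm z powr (p - 1) * norm w" using norm_Jp[OF sm p] by simp
  also have "\<dots> \<le> (norm z powr (p - 1)) powr q / q + norm w powr p / p"
    using Youngs_inequality[of q p "norm z powr (p - 1)" "norm w"] cf p by (simp add: q_def add.commute)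
  also have "(norm z powr (p - 1)) powr q = norm z powr p" using cf by (simp add: powr_powr q_def)
  finally have "Jp p z w \<le> norm z powr p / q + norm w powr p / p" .
  moreover have "(1/p + 1/q) * norm z powr p = norm z powr p" using cf by (simp add: q_def)
  ultimately show ?thesis using Jp_apply_self[OF sm p, of z]
    by (simp add: blinfun.diff_right distrib_right)
qed

lemma Jpstar_subgradient:
  fixes c d :: "'a::banach \<Rightarrow>\<^sub>L real"
  assumes uc: "uniformly_convex TYPE('a)" and p: "1 < p"
  shows "(1/conj_exp p) * norm c powr conj_exp p + (d - c) (Jpstar p c)
           \<le> (1/conj_exp p) * norm d powr conj_exp p"
proof -
  note cf = conj_exp_facts[OF p]
  define q where "q = conj_exp p"
  have "d (Jpstar p c) \<le> norm d * norm (Jpstar p c)"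
    using norm_blinfun[of d "Jpstar p c"] by simp
  also have "\<dots> = norm d * norm c powr (q - 1)" using norm_Jpstar[OF uc p] by (simp add: q_def)
  also have "\<dots> \<le> norm d powr q / q + (norm c powr (q - 1)) powr p / p"
    using Youngs_inequality[of q p "norm d" "norm c powr (q - 1)"] cf p by (simp add: q_def add.commute)
  also have "(norm c powr (q - 1)) powr p = norm c powr q" using cf by (simp add: powr_powr q_def)
  finally have "d (Jpstar p c) \<le> norm d powr q / q + norm c powr q / p" .
  moreover have "(1/p + 1/q) * norm c powr q = norm c powr q" using cf by (simp add: q_def)
  ultimately show ?thesis using apply_Jpstar_self[OF uc p, of c]
    by (simp add: blinfun.diff_left distrib_right q_def)
qed

lemma tendsto_norm_Jpstar:
  fixes c :: "'i \<Rightarrow> ('a::banach \<Rightarrow>\<^sub>L real)"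
  assumes uc: "uniformly_convex TYPE('a)" and p: "1 < p" and lim: "(c \<longlongrightarrow> c0) F"
  shows "((\<lambda>i. norm (Jpstar p (c i))) \<longlongrightarrow> norm (Jpstar p c0)) F"
  unfolding norm_Jpstar[OF uc p] using conj_exp_facts(1)[OF p] by (intro tendsto_intros lim) auto

lemma tendsto_apply_Jpstar:
  fixes c :: "'i \<Rightarrow> ('a::banach \<Rightarrow>\<^sub>L real)"
  assumes uc: "uniformly_convex TYPE('a)" and p: "1 < p" and lim: "(c \<longlongrightarrow> c0) F"
  shows "((\<lambda>i. c0 (Jpstar p (c i))) \<longlongrightarrow> norm c0 powr conj_exp p) F"
proof -
  have err: "((\<lambda>i. (c0 - c i) (Jpstar p (c i))) \<longlongrightarrow> 0) F"
  proof (rule Lim_null_comparison)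
    show "\<forall>\<^sub>F i in F. norm ((c0 - c i) (Jpstar p (c i))) \<le> norm (c0 - c i) * norm (Jpstar p (c i))"
      by (intro always_eventually allI norm_blinfun)
    have "((\<lambda>i. c0 - c i) \<longlongrightarrow> 0) F" using tendsto_diff[OF tendsto_const[of c0] lim] by simp
    hence "((\<lambda>i. norm (c0 - c i) * norm (Jpstar p (c i))) \<longlongrightarrow> 0 * norm (Jpstar p c0)) F"
      by (intro tendsto_intros tendsto_norm_Jpstar[OF uc p lim]) (simp add: tendsto_norm_zero_iff)
    thus "((\<lambda>i. norm (c0 - c i) * norm (Jpstar p (c i))) \<longlongrightarrow> 0) F" by simp
  qed
  have "((\<lambda>i. norm (c i) powr conj_exp p + (c0 - c i) (Jpstar p (c i))) \<longlongrightarrow> norm c0 powr conj_exp p + 0) F"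
    using conj_exp_facts(1)[OF p] by (intro tendsto_intros lim err) auto
  moreover have "norm (c i) powr conj_exp p + (c0 - c i) (Jpstar p (c i)) = c0 (Jpstar p (c i))" for i
    using apply_Jpstar_self[OF uc p, of "c i"] by (simp add: blinfun.diff_left)
  ultimately show ?thesis by simp
qed

lemma tendsto_Jpstar:
  fixes c :: "'i \<Rightarrow> ('a::banach \<Rightarrow>\<^sub>L real)"
  assumes uc: "uniformly_convex TYPE('a)" and p: "1 < p" and lim: "(c \<longlongrightarrow> c0) F"
  shows "((\<lambda>i. Jpstar p (c i)) \<longlongrightarrow> Jpstar p c0) F"
proof -
  define w where "w i = Jpstar p (c i)" for i
  define w0 where "w0 = Jpstar p c0"
  have lim_nw: "((\<lambda>i. norm (w i)) \<longlongrightarrow> norm w0) F"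
    unfolding w_def w0_def by (rule tendsto_norm_Jpstar[OF uc p lim])
  have nw0: "norm w0 = norm c0 powr (conj_exp p - 1)"
    using norm_Jpstar[OF uc p] by (simp add: w0_def)
  show ?thesis unfolding w_def[symmetric] w0_def[symmetric]
  proof (cases "c0 = 0")
    case True
    thus "(w \<longlongrightarrow> w0) F" using lim_nw nw0 by (simp add: tendsto_norm_zero_iff)
  next
    case False
    have ratio: "norm c0 powr conj_exp p / norm w0 = norm c0"
      using False nw0 by (simp add: powr_diff)
    have "((\<lambda>i. c0 (w i) / norm (w i)) \<longlongrightarrow> norm c0 powr conj_exp p / norm w0) F"
      using False nw0 unfolding w_def
      by (intro tendsto_intros tendsto_apply_Jpstar[OF uc p lim] lim_nw[unfolded w_def]) auto
    hence "((\<lambda>i. c0 (sgn (w i))) \<longlongrightarrow> norm c0) F"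
      unfolding ratio by (simp add: sgn_div_norm blinfun.scaleR_right divide_inverse mult.commute)
    moreover have "c0 (sgn w0) = c0 w0 / norm w0"
      by (simp add: sgn_div_norm blinfun.scaleR_right divide_inverse mult.commute)
    hence "c0 (sgn w0) = norm c0"
      using apply_Jpstar_self[OF uc p, of c0] ratio by (simp add: w0_def)
    ultimately have "((\<lambda>i. sgn (w i)) \<longlongrightarrow> sgn w0) F"
      using False by (intro uniformly_convex_tendsto_norming[OF uc]) (auto simp: norm_sgn)
    hence "((\<lambda>i. norm (w i) *\<^sub>R sgn (w i)) \<longlongrightarrow> norm w0 *\<^sub>R sgn w0) F"
      by (rule tendsto_scaleR[OF lim_nw])
    moreover have "norm z *\<^sub>R sgn z = z" for z :: 'a
      by (cases "z = 0") (simp_all add: sgn_div_norm)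
    ultimately show "(w \<longlongrightarrow> w0) F" by simp
  qed
qed

lemma Jpstar_first_order_condition:
  fixes a b :: "'a::banach \<Rightarrow>\<^sub>L real"
  assumes uc: "uniformly_convex TYPE('a)" and p: "1 < p"
    and min: "\<And>\<tau>. (1/conj_exp p) * norm a powr conj_exp p
             \<le> (1/conj_exp p) * norm (a - \<tau> *\<^sub>R b) powr conj_exp p + \<tau> * \<beta>"
  shows "b (Jpstar p a) = \<beta>"
proof -
  define w where "w \<tau> = Jpstar p (a - \<tau> *\<^sub>R b)" for \<tau> :: real
  have slope: "\<tau> * b (w \<tau>) \<le> \<tau> * \<beta>" for \<tau>
    using Jpstar_subgradient[OF uc p, of "a - \<tau> *\<^sub>R b" a] min[of \<tau>]
    by (simp add: w_def blinfun.scaleR_left)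
  have lim: "((\<lambda>\<tau>. b (w \<tau>)) \<longlongrightarrow> b (Jpstar p a)) F" if "F \<le> at 0" for F
  proof -
    have "((\<lambda>\<tau>::real. a - \<tau> *\<^sub>R b) \<longlongrightarrow> a - 0 *\<^sub>R b) F"
      using that by (intro tendsto_intros tendsto_mono[OF _ tendsto_ident_at]) auto
    hence "(w \<longlongrightarrow> Jpstar p a) F" unfolding w_def by (intro tendsto_Jpstar[OF uc p]) simp
    thus ?thesis by (intro tendsto_intros)
  qed
  have "b (Jpstar p a) \<le> \<beta>"
  proof (rule tendsto_upperbound[OF lim[of "at_right 0"]])
    show "\<forall>\<^sub>F \<tau> in at_right 0. b (w \<tau>) \<le> \<beta>"
      unfolding eventually_at_filter by (rule always_eventually) (use slope in \<open>auto simp: mult_le_cancel_left\<close>)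
  qed (simp_all add: at_le)
  moreover have "\<beta> \<le> b (Jpstar p a)"
  proof (rule tendsto_lowerbound[OF lim[of "at_left 0"]])
    show "\<forall>\<^sub>F \<tau> in at_left 0. \<beta> \<le> b (w \<tau>)"
      unfolding eventually_at_filter by (rule always_eventually) (use slope in \<open>auto simp: mult_le_cancel_left\<close>)
  qed (simp_all add: at_le)
  ultimately show ?thesis by simp
qed

lemma sum_scaleR_add_coeff:
  fixes v :: "'i \<Rightarrow> 'b::real_vector"
  assumes "finite K" "k \<in> K"
  shows "(\<Sum>j\<in>K. (t j + (if j = k then \<tau> else 0)) *\<^sub>R v j) = (\<Sum>j\<in>K. t j *\<^sub>R v j) + \<tau> *\<^sub>R v k"
  using assms by (simp add: scaleR_add_left sum.distrib if_distrib[of "\<lambda>c. c *\<^sub>R _"] cong: if_cong)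

lemma Jpstar_first_order_condition_sum:
  fixes c :: "'a::banach \<Rightarrow>\<^sub>L real" and v :: "'i \<Rightarrow> 'a \<Rightarrow>\<^sub>L real"
  assumes uc: "uniformly_convex TYPE('a)" and p: "1 < p" and "finite K" "k \<in> K"
    and min: "\<And>t'. (1/conj_exp p) * norm (c - (\<Sum>j\<in>K. t j *\<^sub>R v j)) powr conj_exp p + (\<Sum>j\<in>K. t j * \<beta> j)
      \<le> (1/conj_exp p) * norm (c - (\<Sum>j\<in>K. t' j *\<^sub>R v j)) powr conj_exp p + (\<Sum>j\<in>K. t' j * \<beta> j)"
  shows "v k (Jpstar p (c - (\<Sum>j\<in>K. t j *\<^sub>R v j))) = \<beta> k"
proof (rule Jpstar_first_order_condition[OF uc p])
  fix \<tau> :: real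
  show "(1/conj_exp p) * norm (c - (\<Sum>j\<in>K. t j *\<^sub>R v j)) powr conj_exp p
      \<le> (1/conj_exp p) * norm (c - (\<Sum>j\<in>K. t j *\<^sub>R v j) - \<tau> *\<^sub>R v k) powr conj_exp p + \<tau> * \<beta> k"
    using min[of "\<lambda>j. t j + (if j = k then \<tau> else 0)"] sum_scaleR_add_coeff[OF assms(3,4), of t \<tau> v]
      sum_scaleR_add_coeff[OF assms(3,4), of t \<tau> \<beta>]
    by (simp add: algebra_simps)
qed

lemma bproj_eqI:
  fixes x z0 :: "'a::real_normed_vector"
  assumes sc: "strictly_convex_space TYPE('a)" and sm: "smooth_space TYPE('a)" and p: "1 < p"
    and "convex C" "z0 \<in> C"
    and variational: "\<And>z. z \<in> C \<Longrightarrow> (Jp p x - Jp p z0) (z - z0) \<le> 0"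
  shows "bproj p C x = z0"
proof -
  have min: "Dp p x z0 \<le> Dp p x z" if "z \<in> C" for z
    using Jp_subgradient[OF sm p, of z0 z] variational[OF that]
    by (simp add: Dp_def blinfun.diff_left blinfun.diff_right)
  have strict: "Dp p x ((1/2) *\<^sub>R (a + b)) < (Dp p x a + Dp p x b)/2" if "a \<noteq> b" for a b
  proof -
    have "(1/p) * norm ((1/2) *\<^sub>R (a + b)) powr p < ((1/p) * norm a powr p + (1/p) * norm b powr p)/2"
      using mult_strict_left_mono[OF norm_powr_midpoint_strict[OF sc that p], of "1/p"] p
      by (simp add: distrib_left)
    moreover have "Jp p x ((1/2) *\<^sub>R (a + b)) = (Jp p x a + Jp p x b)/2"
      by (simp add: blinfun.add_right blinfun.scaleR_right)
    ultimately show ?thesis unfolding Dp_def by argo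
  qed
  show ?thesis
    unfolding bproj_def
  proof (rule the_equality)
    fix z assume "z \<in> C \<and> (\<forall>z'\<in>C. Dp p x z \<le> Dp p x z')"
    thus "z = z0"
      using minimizer_unique_if_midpoint_strict[OF assms(4), of z z0 "Dp p x"] assms(5) min strict by blast
  qed (use assms(5) min in blast)
qed

lemma bprojstar_eqI:
  fixes \<phi> \<psi> :: "'a::banach \<Rightarrow>\<^sub>L real"
  assumes uc: "uniformly_convex TYPE('a)" and sm: "smooth_space TYPE('a)" and p: "1 < p"
    and "convex C" "\<psi> \<in> C"
    and variational: "\<And>\<theta>. \<theta> \<in> C \<Longrightarrow> (\<theta> - \<psi>) (Jpstar p \<phi> - Jpstar p \<psi>) \<le> 0"
  shows "bprojstar p C \<phi> = \<psi>"
proof -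
  have q: "1 < conj_exp p" using conj_exp_facts[OF p] by simp
  have min: "Dpstar p \<phi> \<psi> \<le> Dpstar p \<phi> \<theta>" if "\<theta> \<in> C" for \<theta>
    using Jpstar_subgradient[OF uc p, of \<psi> \<theta>] variational[OF that]
    by (simp add: Dpstar_def blinfun.diff_left blinfun.diff_right)
  have strict: "Dpstar p \<phi> ((1/2) *\<^sub>R (\<theta> + \<theta>')) < (Dpstar p \<phi> \<theta> + Dpstar p \<phi> \<theta>')/2"
    if "\<theta> \<noteq> \<theta>'" for \<theta> \<theta>'
  proof -
    have "(1/conj_exp p) * norm ((1/2) *\<^sub>R (\<theta> + \<theta>')) powr conj_exp p
        < ((1/conj_exp p) * norm \<theta> powr conj_exp p + (1/conj_exp p) * norm \<theta>' powr conj_exp p)/2"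
      using mult_strict_left_mono[OF norm_powr_midpoint_strict[OF strictly_convex_dual[OF uc sm] that q],
          of "1/conj_exp p"] q
      by (simp add: distrib_left)
    moreover have "((1/2) *\<^sub>R (\<theta> + \<theta>')) (Jpstar p \<phi>) = (\<theta> (Jpstar p \<phi>) + \<theta>' (Jpstar p \<phi>))/2"
      by (simp add: blinfun.add_left blinfun.scaleR_left)
    ultimately show ?thesis unfolding Dpstar_def by argo
  qed
  show ?thesis
    unfolding bprojstar_def
  proof (rule the_equality)
    fix \<theta> assume "\<theta> \<in> C \<and> (\<forall>\<theta>'\<in>C. Dpstar p \<phi> \<theta> \<le> Dpstar p \<phi> \<theta>')"
    thus "\<theta> = \<psi>"
      using minimizer_unique_if_midpoint_strict[OF assms(4), of \<theta> \<psi> "Dpstar p \<phi>"] assms(5) min strict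
      by blast
  qed (use assms(5) min in blast)
qed

lemma subspace_perp: "subspace (perp S)"
  by (simp add: subspace_def perp_def blinfun.add_right blinfun.scaleR_right)

lemma span_apply_perp:
  assumes "\<rho> \<in> span S" "z \<in> perp S"
  shows "\<rho> z = 0"
proof -
  have "subspace {\<rho>. blinfun_apply \<rho> z = 0}"
    by (simp add: subspace_def blinfun.add_left blinfun.scaleR_left)
  moreover have "S \<subseteq> {\<rho>. blinfun_apply \<rho> z = 0}" using assms(2) by (auto simp: perp_def)
  ultimately show ?thesis using span_minimal assms(1) by blast
qed

lemma perp_span: "perp (span S) = perp S"
  using span_apply_perp span_base by (fastforce simp: perp_def)

lemma convex_hyperplane_blinfun: "convex (hyperplane v \<beta>)"
  unfolding convex_def hyperplane_def
  by (simp add: blinfun.add_right blinfun.scaleR_right distrib_right[symmetric])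

lemma sum_scaleR_in_span: "(\<Sum>k\<in>K. t k *\<^sub>R v k) \<in> span (v ` K)"
  by (intro span_sum span_scale span_base imageI)

lemma diff_in_span_UN_lessThan:
  assumes "\<And>m. m < n \<Longrightarrow> f (Suc m) - f m \<in> span (W m)"
  shows "f n - f 0 \<in> span (\<Union>m<n. W m)"
  using assms
proof (induction n)
  case (Suc n)
  have "f n - f 0 \<in> span (\<Union>m<Suc n. W m)"
    using Suc span_mono[of "\<Union>m<n. W m" "\<Union>m<Suc n. W m"] by fastforce
  moreover have "f (Suc n) - f n \<in> span (\<Union>m<Suc n. W m)"
    using Suc.prems[of n] span_mono[of "W n" "\<Union>m<Suc n. W m"] by blast
  ultimately have "(f n - f 0) + (f (Suc n) - f n) \<in> span (\<Union>m<Suc n. W m)" by (rule span_add)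
  thus ?case by simp
qed (simp add: span_zero)

lemma bproj_hyperplanes_eq:
  fixes x x' :: "'a::real_normed_vector" and v :: "'i \<Rightarrow> 'a \<Rightarrow>\<^sub>L real"
  assumes sc: "strictly_convex_space TYPE('a)" and sm: "smooth_space TYPE('a)" and p: "1 < p"
    and step: "Jp p x' = Jp p x - (\<Sum>k\<in>K. t k *\<^sub>R v k)"
    and on_hyperplanes: "\<And>k. k \<in> K \<Longrightarrow> v k x' = \<beta> k"
  shows "bproj p (\<Inter>k\<in>K. hyperplane (v k) (\<beta> k)) x = x'"
proof (rule bproj_eqI[OF sc sm p])
  show "convex (\<Inter>k\<in>K. hyperplane (v k) (\<beta> k))"
    by (intro convex_INT ballI convex_hyperplane_blinfun)
  show "x' \<in> (\<Inter>k\<in>K. hyperplane (v k) (\<beta> k))"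
    using on_hyperplanes by (simp add: hyperplane_def)
  fix z assume "z \<in> (\<Inter>k\<in>K. hyperplane (v k) (\<beta> k))"
  hence "z - x' \<in> perp (v ` K)"
    using on_hyperplanes by (simp add: hyperplane_def perp_def blinfun.diff_right)
  thus "(Jp p x - Jp p x') (z - x') \<le> 0"
    using span_apply_perp[OF sum_scaleR_in_span] step by force
qed

lemma bprojstar_translated_span_eq:
  fixes x x' z :: "'a::banach" and v :: "'i \<Rightarrow> 'a \<Rightarrow>\<^sub>L real"
  assumes uc: "uniformly_convex TYPE('a)" and sm: "smooth_space TYPE('a)" and p: "1 < p"
    and step: "Jp p x' = Jp p x - (\<Sum>k\<in>K. t k *\<^sub>R v k)"
    and same_values: "\<And>k. k \<in> K \<Longrightarrow> v k z = v k x'"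
  shows "bprojstar p ((+) (Jp p x) ` span (v ` K)) (Jp p z) = Jp p x'"
proof (rule bprojstar_eqI[OF uc sm p])
  show "convex ((+) (Jp p x) ` span (v ` K))"
    by (intro convex_translation subspace_imp_convex subspace_span)
  show "Jp p x' \<in> (+) (Jp p x) ` span (v ` K)"
    using step span_neg[OF sum_scaleR_in_span] by (intro image_eqI[of _ _ "- (\<Sum>k\<in>K. t k *\<^sub>R v k)"]) auto
  fix \<theta> assume "\<theta> \<in> (+) (Jp p x) ` span (v ` K)"
  then obtain \<sigma> where "\<sigma> \<in> span (v ` K)" "\<theta> - Jp p x' = \<sigma> + (\<Sum>k\<in>K. t k *\<^sub>R v k)"
    using step by force
  hence "\<theta> - Jp p x' \<in> span (v ` K)"
    using span_add[OF _ sum_scaleR_in_span] by simp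
  moreover have "z - x' \<in> perp (v ` K)"
    using same_values by (simp add: perp_def blinfun.diff_right)
  ultimately have "(\<theta> - Jp p x') (z - x') = 0" by (rule span_apply_perp)
  thus "(\<theta> - Jp p x') (Jpstar p (Jp p z) - Jpstar p (Jp p x')) \<le> 0"
    by (simp add: Jpstar_Jp[OF uc sm p])
qed

lemma bproj_perp_span_eq:
  fixes u :: "'a::banach \<Rightarrow>\<^sub>L real" and v :: "'i \<Rightarrow> 'a \<Rightarrow>\<^sub>L real"
  assumes uc: "uniformly_convex TYPE('a)" and sm: "smooth_space TYPE('a)" and p: "1 < p"
    and "finite K"
    and min: "\<And>s'. norm (u - (\<Sum>k\<in>K. s k *\<^sub>R v k)) powr conj_exp p
                  \<le> norm (u - (\<Sum>k\<in>K. s' k *\<^sub>R v k)) powr conj_exp p"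
  shows "bproj p (perp (span (v ` K))) (Jpstar p u) = Jpstar p (u - (\<Sum>k\<in>K. s k *\<^sub>R v k))"
proof (rule bproj_eqI[OF uniformly_convex_imp_strictly_convex[OF uc] sm p])
  define S where "S = (\<Sum>k\<in>K. s k *\<^sub>R v k)"
  have q: "0 < 1 / conj_exp p" using conj_exp_facts[OF p] by simp
  show "convex (perp (span (v ` K)))" by (intro subspace_imp_convex subspace_perp)
  have "v k (Jpstar p (u - S)) = 0" if "k \<in> K" for k
    using Jpstar_first_order_condition_sum[OF uc p \<open>finite K\<close> that, of u s v "\<lambda>_. 0"]
      mult_left_mono[OF min less_imp_le[OF q]]
    by (simp add: S_def)
  thus z0: "Jpstar p (u - S) \<in> perp (span (v ` K))" unfolding perp_span by (auto simp: perp_def)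
  fix z assume "z \<in> perp (span (v ` K))"
  hence "z - Jpstar p (u - S) \<in> perp (span (v ` K))"
    using z0 subspace_perp subspace_diff by blast
  hence "S (z - Jpstar p (u - S)) = 0"
    unfolding perp_span S_def by (rule span_apply_perp[OF sum_scaleR_in_span])
  thus "(Jp p (Jpstar p u) - Jp p (Jpstar p (u - S))) (z - Jpstar p (u - S)) \<le> 0"
    by (simp add: Jp_Jpstar[OF uc sm p])
qed

lemma adj_apply [simp]: "adj A \<phi> z = \<phi> (A z)"
  by (simp add: adj_def)

lemma linear_adj: "linear (adj A)"
  unfolding adj_def
  by (intro bounded_linear.linear bounded_bilinear.bounded_linear_left bounded_bilinear_blinfun_compose)

lemma subspace_range_adj: "subspace (range (adj A))"
  by (rule linear_subspace_image[OF linear_adj subspace_UNIV])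

theorem mainTheorem6:
  fixes A :: "'a::banach \<Rightarrow>\<^sub>L 'b::banach"
    and y :: 'b and p r :: real and N :: nat
    and JY :: "'b \<Rightarrow> ('b \<Rightarrow>\<^sub>L real)"
    and x :: "nat \<Rightarrow> 'a"
    and ws :: "nat \<Rightarrow> nat \<Rightarrow> ('b \<Rightarrow>\<^sub>L real)"
    and s t :: "nat \<Rightarrow> nat \<Rightarrow> real"
    and n :: nat
  defines "M \<equiv> {z. blinfun_apply A z = y}"
    and "u \<equiv> \<lambda>m. adj A (JY (blinfun_apply A (x m) - y))"
    and "v \<equiv> \<lambda>m k. adj A (ws m k)"
    and "\<beta> \<equiv> \<lambda>m k. blinfun_apply (ws m k) y"
    and "V \<equiv> \<lambda>m. span {adj A (ws m k) | k. k \<in> {1..Nn N m}}"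
    and "H \<equiv> \<lambda>m. \<Inter>k\<in>{1..Nn N m}. hyperplane (adj A (ws m k)) (blinfun_apply (ws m k) y)"
  assumes X_uc: "uniformly_convex TYPE('a)"
    and X_smooth: "smooth_space TYPE('a)"
    and p_gt: "1 < p" and r_gt: "1 < r" and N_pos: "1 \<le> N"
    and y_range: "y \<in> range (blinfun_apply A)"
    and JY_dual: "\<And>w. blinfun_apply (JY w) w = norm w powr r \<and> norm (JY w) = norm w powr (r - 1)"
    and x0: "Jp p (x 0) \<in> closure (range (adj A))"
    \<comment> \<open>the iteration, as long as all residuals so far are nonzero\<close>
    and s_min: "\<And>m. (\<forall>i\<le>m. blinfun_apply A (x i) \<noteq> y) \<Longrightarrow> (\<forall>s'.
         norm (u m - (\<Sum>k\<in>{1..Nprev N m}. s m k *\<^sub>R v (m - 1) k)) powr (conj_exp p)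
       \<le> norm (u m - (\<Sum>k\<in>{1..Nprev N m}. s' k *\<^sub>R v (m - 1) k)) powr (conj_exp p))"
    and ws_new: "\<And>m. (\<forall>i\<le>m. blinfun_apply A (x i) \<noteq> y) \<Longrightarrow>
         ws m (Nn N m) = JY (blinfun_apply A (x m) - y)
                          - (\<Sum>k\<in>{1..Nprev N m}. s m k *\<^sub>R ws (m - 1) k)"
    and ws_old: "\<And>m k. (\<forall>i\<le>m. blinfun_apply A (x i) \<noteq> y) \<Longrightarrow> k \<in> {1..<Nn N m} \<Longrightarrow>
         ws m k = ws (m - 1) (k + Nprev N m + 1 - Nn N m)"
    and t_min: "\<And>m. (\<forall>i\<le>m. blinfun_apply A (x i) \<noteq> y) \<Longrightarrow> (\<forall>t'.
         (1 / conj_exp p) * norm (Jp p (x m) - (\<Sum>k\<in>{1..Nn N m}. t m k *\<^sub>R v m k)) powr (conj_exp p)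
           + (\<Sum>k\<in>{1..Nn N m}. t m k * \<beta> m k)
       \<le> (1 / conj_exp p) * norm (Jp p (x m) - (\<Sum>k\<in>{1..Nn N m}. t' k *\<^sub>R v m k)) powr (conj_exp p)
           + (\<Sum>k\<in>{1..Nn N m}. t' k * \<beta> m k))"
    and x_next: "\<And>m. (\<forall>i\<le>m. blinfun_apply A (x i) \<noteq> y) \<Longrightarrow>
         x (Suc m) = Jpstar p (Jp p (x m) - (\<Sum>k\<in>{1..Nn N m}. t m k *\<^sub>R v m k))"
    and active: "\<forall>i\<le>n. blinfun_apply A (x i) \<noteq> y"
  shows "M \<subseteq> H n
    \<and> Jp p (x n) - Jp p (x 0) \<in> span (\<Union>m<n. V m)
    \<and> Jp p (x n) - Jp p (x 0) \<in> closure (range (adj A))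
    \<and> x (Suc n) = bproj p (H n) (x n)
    \<and> (\<forall>z\<in>M. Jp p (x (Suc n)) = bprojstar p ((+) (Jp p (x n)) ` V n) (Jp p z))
    \<and> Jpstar p (v n (Nn N n))
        = bproj p (perp (if n = 0 then {0} else V (n - 1))) (Jpstar p (u n))"
proof -
  have sc: "strictly_convex_space TYPE('a)" using uniformly_convex_imp_strictly_convex[OF X_uc] .
  have V_eq: "V m = span (v m ` {1..Nn N m})" for m
    unfolding V_def v_def Setcompr_eq_image ..
  have step: "Jp p (x (Suc m)) = Jp p (x m) - (\<Sum>k\<in>{1..Nn N m}. t m k *\<^sub>R v m k)" if "m \<le> n" for m
    using x_next[of m] active that Jp_Jpstar[OF X_uc X_smooth p_gt] by simp
  have on_hyperplanes: "v n k (x (Suc n)) = \<beta> n k" if "k \<in> {1..Nn N n}" for k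
    using Jpstar_first_order_condition_sum[OF X_uc p_gt finite_atLeastAtMost that t_min[OF active, rule_format]]
    by (simp add: x_next[OF active])
  have "M \<subseteq> H n" unfolding M_def H_def hyperplane_def by auto
  moreover have span_steps: "Jp p (x n) - Jp p (x 0) \<in> span (\<Union>m<n. V m)"
    using step span_neg[OF sum_scaleR_in_span]
    by (intro diff_in_span_UN_lessThan[where f="\<lambda>m. Jp p (x m)"]) (simp add: V_eq span_span)
  moreover have "span (\<Union>m<n. V m) \<subseteq> range (adj A)"
  proof -
    have "V m \<subseteq> range (adj A)" for m unfolding V_def by (intro span_minimal subspace_range_adj) auto
    thus ?thesis by (intro span_minimal subspace_range_adj) auto
  qed
  moreover have "x (Suc n) = bproj p (H n) (x n)"
    unfolding H_def using bproj_hyperplanes_eq[OF sc X_smooth p_gt step on_hyperplanes]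
    by (simp add: v_def \<beta>_def)
  moreover have "Jp p (x (Suc n)) = bprojstar p ((+) (Jp p (x n)) ` V n) (Jp p z)" if "z \<in> M" for z
    using bprojstar_translated_span_eq[OF X_uc X_smooth p_gt step, of n z] on_hyperplanes that
    by (simp add: V_eq M_def v_def \<beta>_def)
  moreover have "Jpstar p (v n (Nn N n)) = bproj p (perp (if n = 0 then {0} else V (n - 1))) (Jpstar p (u n))"
  proof -
    have "v n (Nn N n) = u n - (\<Sum>k\<in>{1..Nprev N n}. s n k *\<^sub>R v (n - 1) k)"
      using linear_adj[of A] by (simp add: v_def u_def ws_new[OF active] linear_diff linear_sum linear_scale)
    moreover have "(if n = 0 then {0} else V (n - 1)) = span (v (n - 1) ` {1..Nprev N n})"
      by (simp add: V_eq Nprev_def)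
    ultimately show ?thesis
      using bproj_perp_span_eq[OF X_uc X_smooth p_gt finite_atLeastAtMost s_min[OF active, rule_format]] by simp
  qed
  ultimately show ?thesis using closure_subset by blast
qed

end
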